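(* Let $q\ge 1$, $d=2^q$, and let $\hat H$ be a Hermitian operator on $\mathbb{C}^d$ with eigenvalues $0<\lambda_0<\lambda_1\le\cdots\le\lambda_{d-1}\le 1$ and corresponding orthonormal eigenvectors $\ket{\lambda_0},\dots,\ket{\lambda_{d-1}}$. Let $\omega=\pi/4$ and define the unitary on $\mathbb{C}^2\otimes\mathbb{C}^d$ $$\hat U=\ket{0}\bra{0}\otimes e^{i\omega\hat H}+i\,\ket{1}\bra{1}\otimes e^{-i\omega\hat H}.$$ Let $\ket{\alpha}=\sum_{j=0}^{d-1}\gamma_j\ket{\lambda_j}$ be a unit vector in $\mathbb{C}^d$, let $\ket{+}=(\ket{0}+\ket{1})/\sqrt2$, $\ket{\Psi}=\ket{+}\otimes\ket{\alpha}$, $\hat R=\hat{\mathbb 1}-2\ket{\Psi}\bra{\Psi}$, and $\hat T=\hat R\hat U\hat R\hat U^\dagger$. For $k\in\{0,1\}$ let $p_k=\|(\bra{k}\otimes\hat{\mathbb 1})\hat T\ket{\Psi}\|^2$ and $\ket{\varphi_{\mathrm{out},k}}=(\bra{k}\otimes\hat{\mathbb 1})\hat T\ket{\Psi}/\sqrt{p_k}$. For a unit vector $\ket{\psi}\in\mathbb{C}^d$ write $\Gamma_{\ket\psi}=|\braket{\lambda_0}{\psi}|^2$. Define $\mathcal W=\bra{\Psi}\hat U\ket{\Psi}$, $\tilde\lambda_j=\frac{\pi}{4}(1-\lambda_j)$, $\chi=4|\mathcal W|^2-1$, $\xi_j=|\mathcal W|-\cos\tilde\lambda_j$, and $$c_\star=4\cos\tilde\lambda_0\,(4\cos^2\tilde\lambda_0-1)\,(\cos\tilde\lambda_1-\cos\tilde\lambda_0).$$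 Then $\mathcal W=|\mathcal W|e^{i\pi/4}$ with $|\mathcal W|=\sum_j|\gamma_j|^2\cos\tilde\lambda_j$, $c_\star>0$, and, assuming $0<\Gamma_{\ket{\alpha}}<1$, for each $k\in\{0,1\}$, $$\Gamma_{\ket{\varphi_{\mathrm{out},k}}}-\Gamma_{\ket{\alpha}}=4|\mathcal W|\,\chi\,\xi_0\,|\gamma_0|^2\ \ge\ c_\star\,\Gamma_{\ket{\alpha}}\bigl(1-\Gamma_{\ket{\alpha}}\bigr)>0.$$
   Context: All operators act on finite-dimensional complex Hilbert spaces; $\bra{k}\otimes\hat{\mathbb 1}$ denotes the partial inner product with the computational-basis state $\ket{k}$ of the first (ancilla) qubit. *)

theory Defs
  imports "HOL-Analysis.Analysis" "Jordan_Normal_Form.Matrix"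
begin

definition braket :: "complex vec \<Rightarrow> complex vec \<Rightarrow> complex" where
  "braket u v = (\<Sum>i<dim_vec v. cnj (u $ i) * v $ i)"

definition vnorm :: "complex vec \<Rightarrow> real" where
  "vnorm v = sqrt (\<Sum>i<dim_vec v. (cmod (v $ i))\<^sup>2)"

definition outer :: "complex vec \<Rightarrow> complex vec \<Rightarrow> complex mat" where
  "outer u v = mat (dim_vec u) (dim_vec v) (\<lambda>(i,j). u $ i * cnj (v $ j))"

definition adj :: "complex mat \<Rightarrow> complex mat" where
  "adj A = mat (dim_col A) (dim_row A) (\<lambda>(i,j). cnj (A $$ (j,i)))"

definition hermitian :: "complex mat \<Rightarrow> bool" where
  "hermitian A \<longleftrightarrow> adj A = A"

definition mexp :: "complex mat \<Rightarrow> complex mat" where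
  "mexp A = mat (dim_row A) (dim_col A) (\<lambda>(i,j). \<Sum>n. (A ^\<^sub>m n) $$ (i,j) / of_nat (fact n))"

text \<open>Kronecker (tensor) products; index of the first factor is the most significant.\<close>
definition kron_vec :: "complex vec \<Rightarrow> complex vec \<Rightarrow> complex vec" where
  "kron_vec a b = vec (dim_vec a * dim_vec b) (\<lambda>i. a $ (i div dim_vec b) * b $ (i mod dim_vec b))"

definition kron_mat :: "complex mat \<Rightarrow> complex mat \<Rightarrow> complex mat" where
  "kron_mat A B = mat (dim_row A * dim_row B) (dim_col A * dim_col B)
     (\<lambda>(i,j). A $$ (i div dim_row B, j div dim_col B) * B $$ (i mod dim_row B, j mod dim_col B))"

definition ket :: "nat \<Rightarrow> complex vec" where
  "ket k = unit_vec 2 k"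

definition partial_bra :: "nat \<Rightarrow> nat \<Rightarrow> complex vec \<Rightarrow> complex vec" where
  "partial_bra k d w = kron_mat (adj (mat_of_cols 2 [ket k])) (1\<^sub>m d) *\<^sub>v w"

end

(*
  In the eigenbasis of H every operator of the circuit acts diagonally, so the computation splits
  into d independent ones.  With theta_j = pi lam_j / 4, the controlled evolution U multiplies the
  j-th coordinate by e^(i theta_j) on the ancilla branch |0> and by i e^(-i theta_j) on the branch
  |1>; the average of the two is e^(i pi/4) cos lt_j, which gives W = e^(i pi/4) C with
  C = sum_j |gamma_j|^2 cos lt_j.  Since R is a reflection and U is unitary,
  T Psi = chi Psi - 2 cnj W U Psi, so each branch of the output multiplies gamma_j by
  (chi - 2 C e^(-+ i lt_j)) / sqrt 2.  Because chi = 4 C^2 - 1 these factors make the output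
  branch have squared norm exactly 1/2, and the ground-state weight after normalisation is
  |gamma_0|^2 (1 + 4 C chi (C - cos lt_0)).  For the lower bound, C is a weighted mean of the
  increasing values cos lt_j > 1/2, so C - cos lt_0 >= (1 - |gamma_0|^2) (cos lt_1 - cos lt_0).
*)

theory Submission
  imports Defs "Jordan_Normal_Form.Determinant"
begin

unbundle no vec_syntax

section \<open>Inner products, adjoints and reflections\<close>

lemma cnj_mult_self: "cnj z * z = of_real ((cmod z)\<^sup>2)"
  using complex_norm_square[of z] by (simp only: mult.commute)

lemma braket_smult_right: "braket u (c \<cdot>\<^sub>v x) = c * braket u x"
  by (simp add: braket_def sum_distrib_left mult_ac)

lemma braket_minus_right:
  "x \<in> carrier_vec n \<Longrightarrow> y \<in> carrier_vec n \<Longrightarrow> braket u (x - y) = braket u x - braket u y"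
  by (simp add: braket_def sum_subtractf algebra_simps)

lemma braket_smult_left: "dim_vec x = dim_vec y \<Longrightarrow> braket (c \<cdot>\<^sub>v x) y = cnj c * braket x y"
  by (simp add: braket_def sum_distrib_left mult_ac)

lemma adj_adj: "adj (adj A) = A"
  by (rule eq_matI) (simp_all add: adj_def)

lemma cnj_braket: "dim_vec x = dim_vec y \<Longrightarrow> cnj (braket x y) = braket y x"
  by (simp add: braket_def mult.commute)

lemma braket_self: "braket x x = of_real ((vnorm x)\<^sup>2)"
proof -
  have "braket x x = (\<Sum>i<dim_vec x. of_real ((cmod (x $ i))\<^sup>2))"
    unfolding braket_def complex_norm_square by (simp add: mult.commute)
  then show ?thesis by (simp add: vnorm_def sum_nonneg)
qed

lemma braket_adj_mult_vec:
  assumes "A \<in> carrier_mat n m" "x \<in> carrier_vec m" "y \<in> carrier_vec n"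
  shows "braket x (adj A *\<^sub>v y) = braket (A *\<^sub>v x) y"
proof -
  have "braket x (adj A *\<^sub>v y) = (\<Sum>i<m. \<Sum>k<n. cnj (x $ i) * (cnj (A $$ (k, i)) * y $ k))"
    using assms by (simp add: braket_def adj_def scalar_prod_def lessThan_atLeast0 sum_distrib_left)
  also have "\<dots> = (\<Sum>k<n. \<Sum>i<m. cnj (A $$ (k, i) * x $ i) * y $ k)"
    by (subst sum.swap) (simp add: mult_ac)
  also have "\<dots> = braket (A *\<^sub>v x) y"
    using assms by (simp add: braket_def scalar_prod_def lessThan_atLeast0 sum_distrib_right)
  finally show ?thesis .
qed

lemma reflection_mult_vec:
  assumes P: "P \<in> carrier_vec n" and w: "w \<in> carrier_vec n"
  shows "(1\<^sub>m n - 2 \<cdot>\<^sub>m outer P P) *\<^sub>v w = w - (2 * braket P w) \<cdot>\<^sub>v P"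
proof -
  have PP: "outer P P \<in> carrier_mat n n" using P by (simp add: outer_def)
  have "(2 \<cdot>\<^sub>m outer P P) *\<^sub>v w = (2 * braket P w) \<cdot>\<^sub>v P"
  proof (rule eq_vecI)
    fix i assume "i < dim_vec ((2 * braket P w) \<cdot>\<^sub>v P)"
    then have i: "i < n" using P by simp
    have "((2 \<cdot>\<^sub>m outer P P) *\<^sub>v w) $ i = (\<Sum>j<n. 2 * (P $ i * cnj (P $ j)) * w $ j)"
      using i P w PP by (auto simp: outer_def scalar_prod_def lessThan_atLeast0 intro!: sum.cong)
    also have "\<dots> = ((2 * braket P w) \<cdot>\<^sub>v P) $ i"
      using i P w by (simp add: braket_def sum_distrib_left mult_ac)
    finally show "((2 \<cdot>\<^sub>m outer P P) *\<^sub>v w) $ i = ((2 * braket P w) \<cdot>\<^sub>v P) $ i" .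
  qed (use PP P in auto)
  moreover have "(1\<^sub>m n - 2 \<cdot>\<^sub>m outer P P) *\<^sub>v w = 1\<^sub>m n *\<^sub>v w - (2 \<cdot>\<^sub>m outer P P) *\<^sub>v w"
    using PP w by (intro minus_mult_distrib_mat_vec) auto
  ultimately show ?thesis using w by simp
qed

lemma reflection_commutator_mult_vec:
  assumes U: "U \<in> carrier_mat n n" "U * adj U = 1\<^sub>m n"
    and \<Psi>: "\<Psi> \<in> carrier_vec n" "braket \<Psi> \<Psi> = 1"
    and R: "R = 1\<^sub>m n - 2 \<cdot>\<^sub>m outer \<Psi> \<Psi>"
    and W: "W = braket \<Psi> (U *\<^sub>v \<Psi>)"
  shows "(R * U * R * adj U) *\<^sub>v \<Psi> = of_real (4 * (cmod W)\<^sup>2 - 1) \<cdot>\<^sub>v \<Psi> - (2 * cnj W) \<cdot>\<^sub>v (U *\<^sub>v \<Psi>)"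
proof -
  have adjU: "adj U \<in> carrier_mat n n" using U by (simp add: adj_def)
  have Rc: "R \<in> carrier_mat n n" using \<Psi> unfolding R carrier_mat_def by (simp add: outer_def)
  have U\<Psi>: "U *\<^sub>v \<Psi> \<in> carrier_vec n" using U \<Psi> by simp
  have "braket \<Psi> (adj U *\<^sub>v \<Psi>) = braket (U *\<^sub>v \<Psi>) \<Psi>"
    using U \<Psi> by (simp add: braket_adj_mult_vec)
  also have "\<dots> = cnj W" using U \<Psi> by (simp add: W cnj_braket)
  finally have "R *\<^sub>v (adj U *\<^sub>v \<Psi>) = adj U *\<^sub>v \<Psi> - (2 * cnj W) \<cdot>\<^sub>v \<Psi>"
    using adjU \<Psi> by (simp add: R reflection_mult_vec)
  moreover have "U *\<^sub>v (adj U *\<^sub>v \<Psi>) = \<Psi>"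
    using U adjU \<Psi> by (simp flip: assoc_mult_mat_vec)
  ultimately have URU: "U *\<^sub>v (R *\<^sub>v (adj U *\<^sub>v \<Psi>)) = \<Psi> - (2 * cnj W) \<cdot>\<^sub>v (U *\<^sub>v \<Psi>)"
    using U adjU \<Psi> by (simp add: mult_minus_distrib_mat_vec mult_mat_vec)
  have "braket \<Psi> (\<Psi> - (2 * cnj W) \<cdot>\<^sub>v (U *\<^sub>v \<Psi>)) = 1 - 2 * of_real ((cmod W)\<^sup>2)"
    using \<Psi> U\<Psi> cnj_mult_self[of W] by (simp add: braket_minus_right braket_smult_right flip: W)
  then have "R *\<^sub>v (\<Psi> - (2 * cnj W) \<cdot>\<^sub>v (U *\<^sub>v \<Psi>))
      = (\<Psi> - (2 * cnj W) \<cdot>\<^sub>v (U *\<^sub>v \<Psi>)) - (2 * (1 - 2 * of_real ((cmod W)\<^sup>2))) \<cdot>\<^sub>v \<Psi>"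
    using \<Psi> U\<Psi> by (simp add: R reflection_mult_vec)
  also have "\<dots> = of_real (4 * (cmod W)\<^sup>2 - 1) \<cdot>\<^sub>v \<Psi> - (2 * cnj W) \<cdot>\<^sub>v (U *\<^sub>v \<Psi>)"
    using \<Psi> U by (intro eq_vecI) (auto simp: algebra_simps)
  finally have "R *\<^sub>v (\<Psi> - (2 * cnj W) \<cdot>\<^sub>v (U *\<^sub>v \<Psi>))
      = of_real (4 * (cmod W)\<^sup>2 - 1) \<cdot>\<^sub>v \<Psi> - (2 * cnj W) \<cdot>\<^sub>v (U *\<^sub>v \<Psi>)" .
  moreover have "(R * U * R * adj U) *\<^sub>v \<Psi> = (R * U * R) *\<^sub>v (adj U *\<^sub>v \<Psi>)"
    using U adjU Rc \<Psi> by (intro assoc_mult_mat_vec) auto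
  moreover have "\<dots> = (R * U) *\<^sub>v (R *\<^sub>v (adj U *\<^sub>v \<Psi>))"
    using U adjU Rc \<Psi> by (intro assoc_mult_mat_vec) auto
  moreover have "\<dots> = R *\<^sub>v (U *\<^sub>v (R *\<^sub>v (adj U *\<^sub>v \<Psi>)))"
    using U adjU Rc \<Psi> by (intro assoc_mult_mat_vec) auto
  ultimately show ?thesis by (simp add: URU)
qed

section \<open>Block structure of the two-register space\<close>

lemma braket_append_vec:
  assumes "x \<in> carrier_vec n" "u \<in> carrier_vec n" "y \<in> carrier_vec m" "v \<in> carrier_vec m"
  shows "braket (x @\<^sub>v y) (u @\<^sub>v v) = braket x u + braket y v"
proof -
  have split: "(\<Sum>i<n + m. f i) = (\<Sum>i<n. f i) + (\<Sum>i<m. f (n + i))" for f :: "nat \<Rightarrow> complex"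
    by (induction m) (simp_all add: ac_simps)
  have "braket (x @\<^sub>v y) (u @\<^sub>v v) = (\<Sum>i<n + m. cnj ((x @\<^sub>v y) $ i) * (u @\<^sub>v v) $ i)"
    using assms by (simp add: braket_def)
  also have "\<dots> = (\<Sum>i<n. cnj (x $ i) * u $ i) + (\<Sum>i<m. cnj (y $ i) * v $ i)"
    using assms by (simp add: split)
  finally show ?thesis using assms by (simp add: braket_def)
qed

lemma smult_append_vec: "c \<cdot>\<^sub>v (x @\<^sub>v y) = (c \<cdot>\<^sub>v x) @\<^sub>v (c \<cdot>\<^sub>v y)"
  by (rule eq_vecI) auto

lemma minus_append_vec:
  "x \<in> carrier_vec n \<Longrightarrow> u \<in> carrier_vec n \<Longrightarrow> y \<in> carrier_vec m \<Longrightarrow> v \<in> carrier_vec m \<Longrightarrow>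
   (x @\<^sub>v y) - (u @\<^sub>v v) = (x - u) @\<^sub>v (y - v)"
  by (rule eq_vecI) auto

lemma two_blocks_div_mod:
  fixes i d :: nat
  assumes "i < 2 * d"
  shows "i div d = (if i < d then 0 else 1)" and "i mod d = (if i < d then i else i - d)"
  using assms by (auto simp: le_div_geq le_mod_geq)

lemma kron_vec_ket_sum: "kron_vec (c \<cdot>\<^sub>v (ket 0 + ket 1)) x = (c \<cdot>\<^sub>v x) @\<^sub>v (c \<cdot>\<^sub>v x)"
  by (rule eq_vecI) (auto simp: kron_vec_def ket_def two_blocks_div_mod)

lemma kron_ket_projections_four_block:
  assumes "A \<in> carrier_mat d d" "B \<in> carrier_mat d d"
  shows "kron_mat (outer (ket 0) (ket 0)) A + c \<cdot>\<^sub>m kron_mat (outer (ket 1) (ket 1)) B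
       = four_block_mat A (0\<^sub>m d d) (0\<^sub>m d d) (c \<cdot>\<^sub>m B)"
  using assms by (intro eq_matI) (auto simp: kron_mat_def outer_def ket_def two_blocks_div_mod)

lemma adj_zero_mat: "adj (0\<^sub>m n m) = 0\<^sub>m m n"
  by (rule eq_matI) (auto simp: adj_def)

lemma adj_four_block_mat:
  assumes "A \<in> carrier_mat nr1 nc1" "B \<in> carrier_mat nr1 nc2"
    and "C \<in> carrier_mat nr2 nc1" "D \<in> carrier_mat nr2 nc2"
  shows "adj (four_block_mat A B C D) = four_block_mat (adj A) (adj C) (adj B) (adj D)"
  using assms by (intro eq_matI) (auto simp: adj_def)

lemma index_partial_bra:
  assumes w: "w \<in> carrier_vec (2 * d)" and k: "k < 2" and i: "i < d"
  shows "partial_bra k d w $ i = w $ (k * d + i)"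
proof -
  have block: "(j div d = k \<and> j mod d = i) \<longleftrightarrow> j = k * d + i" for j
    using i div_mult_mod_eq[of j d] by auto
  have div_less: "j < 2 * d \<Longrightarrow> j div d < 2" for j
    by (simp add: two_blocks_div_mod)
  have "partial_bra k d w $ i = (\<Sum>j<2 * d. if j = k * d + i then w $ j else 0)"
    using w k i
    by (auto simp: partial_bra_def kron_mat_def adj_def ket_def mat_of_cols_def scalar_prod_def
        lessThan_atLeast0 block[symmetric] div_less intro!: sum.cong)
  also have "\<dots> = w $ (k * d + i)"
    using k i by (auto simp: less_2_cases_iff)
  finally show ?thesis .
qed

lemma partial_bra_append_vec:
  assumes "x \<in> carrier_vec d" "y \<in> carrier_vec d"
  shows "partial_bra 0 d (x @\<^sub>v y) = x" and "partial_bra 1 d (x @\<^sub>v y) = y"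
  using assms
  by (auto simp: index_partial_bra mult_2 intro!: eq_vecI) (simp_all add: partial_bra_def kron_mat_def adj_def)

lemma quarter_pi_phase_sum:
  "cis (pi / 4 * l) + \<i> * cis (- (pi / 4 * l)) = 2 * cis (pi / 4) * of_real (cos (pi / 4 * (1 - l)))"
proof -
  have "cis t + \<i> * cis (- t) = 2 * cis (pi / 4) * of_real (cos (pi / 4 - t))" for t
    by (simp add: complex_eq_iff cos_diff sin_diff cos_45 sin_45 algebra_simps)
  from this[of "pi / 4 * l"] show ?thesis by (simp add: right_diff_distrib)
qed

lemma quarter_pi_phase_shifts:
  "cnj (of_real C * cis (pi / 4)) * cis (pi / 4 * l) = of_real C * cis (- (pi / 4 * (1 - l)))"
  "cnj (of_real C * cis (pi / 4)) * (\<i> * cis (- (pi / 4 * l))) = of_real C * cis (pi / 4 * (1 - l))"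
proof -
  have cancel: "cis (pi / 4) * cis (- (pi / 4)) = 1"
    by (simp add: cis_mult)
  have "cis (pi / 4 * l) = cis (pi / 4) * cis (- (pi / 4 * (1 - l)))"
    unfolding cis_mult by (rule arg_cong[where f = cis]) (simp add: field_simps)
  then show "cnj (of_real C * cis (pi / 4)) * cis (pi / 4 * l) = of_real C * cis (- (pi / 4 * (1 - l)))"
    by (simp add: cis_cnj mult_ac cancel flip: cis_mult)
  have "\<i> * cis (- (pi / 4 * l)) = cis (pi / 2) * cis (- (pi / 4 * l))"
    by simp
  also have "\<dots> = cis (pi / 4) * cis (pi / 4 * (1 - l))"
    unfolding cis_mult by (rule arg_cong[where f = cis]) (simp add: field_simps)
  finally show "cnj (of_real C * cis (pi / 4)) * (\<i> * cis (- (pi / 4 * l))) = of_real C * cis (pi / 4 * (1 - l))"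
    by (simp add: cis_cnj mult_ac cancel flip: cis_mult)
qed

lemma cmod_real_minus_cis_sq: "(cmod (of_real x - of_real y * cis u))\<^sup>2 = x\<^sup>2 - 2 * x * y * cos u + y\<^sup>2"
proof -
  have "(cmod (of_real x - of_real y * cis u))\<^sup>2 = (x - y * cos u)\<^sup>2 + (y * sin u)\<^sup>2"
    by (simp add: cmod_power2)
  also have "(y * sin u)\<^sup>2 = y\<^sup>2 - (y * cos u)\<^sup>2"
    by (simp add: power_mult_distrib sin_squared_eq algebra_simps)
  finally show ?thesis by (simp add: power2_eq_square algebra_simps)
qed

section \<open>Functional calculus in an orthonormal eigenbasis\<close>

lemma index_mat_diag_mult_vec: "v \<in> carrier_vec n \<Longrightarrow> i < n \<Longrightarrow> (mat_diag n f *\<^sub>v v) $ i = f i * v $ i"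
  by (simp add: mat_diag_def scalar_prod_def if_distrib[of "\<lambda>a. a * _"] cong: if_cong)

locale orthonormal_eigenbasis =
  fixes d :: nat and H :: "complex mat" and lam :: "nat \<Rightarrow> real" and ev :: "nat \<Rightarrow> complex vec"
  assumes H_carrier: "H \<in> carrier_mat d d"
    and ev_carrier: "\<And>j. j < d \<Longrightarrow> ev j \<in> carrier_vec d"
    and ev_eigen: "\<And>j. j < d \<Longrightarrow> H *\<^sub>v ev j = of_real (lam j) \<cdot>\<^sub>v ev j"
    and ev_orthonormal: "\<And>i j. i < d \<Longrightarrow> j < d \<Longrightarrow> braket (ev i) (ev j) = (if i = j then 1 else 0)"
begin

definition ev_mat :: "complex mat" where
  "ev_mat = mat d d (\<lambda>(i, j). ev j $ i)"

lemma ev_mat_carrier [simp]: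
  "ev_mat \<in> carrier_mat d d" "dim_row ev_mat = d" "dim_col ev_mat = d"
  "adj ev_mat \<in> carrier_mat d d" "dim_row (adj ev_mat) = d" "dim_col (adj ev_mat) = d"
  by (simp_all add: ev_mat_def adj_def)

(* The associativity and carrier rules of Jordan_Normal_Form leave dimensions that simp cannot
   instantiate; these are their instances at dimension d. *)
lemmas square_mat_simps =
  assoc_mult_mat[of _ d d _ d _ d] mult_carrier_mat[of _ d d _ d]
  left_mult_one_mat[of _ d d] right_mult_one_mat[of _ d d]
  assoc_mult_mat_vec[of _ d d _ d] mult_mat_vec_carrier[of _ d d]

lemma dim_ev [simp]: "j < d \<Longrightarrow> dim_vec (ev j) = d"
  by (rule carrier_vecD[OF ev_carrier])

lemma adj_ev_mat_mult_ev_mat: "adj ev_mat * ev_mat = 1\<^sub>m d"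
proof (rule eq_matI)
  fix i k assume "i < dim_row (1\<^sub>m d)" "k < dim_col (1\<^sub>m d)"
  then have ik: "i < d" "k < d" by auto
  then have "(adj ev_mat * ev_mat) $$ (i, k) = braket (ev i) (ev k)"
    by (auto simp: ev_mat_def adj_def scalar_prod_def braket_def lessThan_atLeast0 intro!: sum.cong)
  then show "(adj ev_mat * ev_mat) $$ (i, k) = 1\<^sub>m d $$ (i, k)"
    using ik by (simp add: ev_orthonormal)
qed (auto simp: ev_mat_def adj_def)

lemma ev_mat_mult_adj_ev_mat: "ev_mat * adj ev_mat = 1\<^sub>m d"
  by (rule mat_mult_left_right_inverse[OF _ _ adj_ev_mat_mult_ev_mat]) simp_all

(* The j-th coordinate of x in the eigenbasis, stated on rows because simp rewrites
   (adj ev_mat *v x) $ j to row (adj ev_mat) j \<bullet> x before any lemma about it can apply. *)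
lemma row_adj_ev_mat_scalar_prod [simp]:
  "x \<in> carrier_vec d \<Longrightarrow> j < d \<Longrightarrow> row (adj ev_mat) j \<bullet> x = braket (ev j) x"
  by (auto simp: ev_mat_def adj_def scalar_prod_def braket_def lessThan_atLeast0 intro!: sum.cong)

definition eigen_diag :: "(nat \<Rightarrow> complex) \<Rightarrow> complex mat" where
  "eigen_diag f = ev_mat * mat_diag d f * adj ev_mat"

lemma eigen_diag_carrier [simp]:
  "eigen_diag f \<in> carrier_mat d d" "dim_row (eigen_diag f) = d" "dim_col (eigen_diag f) = d"
  by (simp_all add: eigen_diag_def square_mat_simps)

lemma index_eigen_diag:
  "i < d \<Longrightarrow> k < d \<Longrightarrow> eigen_diag f $$ (i, k) = (\<Sum>j<d. f j * ev j $ i * cnj (ev j $ k))"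
  unfolding eigen_diag_def
  by (auto simp: mat_diag_mult_right[of _ d] ev_mat_def adj_def scalar_prod_def lessThan_atLeast0 mult_ac
      intro!: sum.cong)

lemma eigen_diag_cong: "(\<And>j. j < d \<Longrightarrow> f j = g j) \<Longrightarrow> eigen_diag f = eigen_diag g"
  by (auto simp: index_eigen_diag intro!: eq_matI sum.cong)

lemma smult_eigen_diag: "c \<cdot>\<^sub>m eigen_diag f = eigen_diag (\<lambda>j. c * f j)"
  by (auto simp: index_eigen_diag sum_distrib_left mult_ac intro!: eq_matI)

lemma adj_eigen_diag: "adj (eigen_diag f) = eigen_diag (\<lambda>j. cnj (f j))"
  by (auto simp: index_eigen_diag adj_def mult_ac intro!: eq_matI)

lemma eigen_diag_one: "eigen_diag (\<lambda>_. 1) = 1\<^sub>m d"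
  by (simp add: eigen_diag_def ev_mat_mult_adj_ev_mat square_mat_simps)

lemma eigen_diag_mult: "eigen_diag f * eigen_diag g = eigen_diag (\<lambda>j. f j * g j)"
proof -
  have cancel: "adj ev_mat * (ev_mat * X) = X" if "X \<in> carrier_mat d d" for X
  proof -
    have "adj ev_mat * (ev_mat * X) = (adj ev_mat * ev_mat) * X"
      using that by (simp add: square_mat_simps)
    then show ?thesis using that by (simp add: adj_ev_mat_mult_ev_mat)
  qed
  have diag: "mat_diag d f * (mat_diag d g * X) = mat_diag d (\<lambda>j. f j * g j) * X"
    if "X \<in> carrier_mat d d" for X
    using that by (simp flip: mat_diag_diag add: square_mat_simps)
  show ?thesis by (simp add: eigen_diag_def square_mat_simps cancel diag)
qed

lemma H_eq_eigen_diag: "H = eigen_diag (\<lambda>j. of_real (lam j))"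
proof -
  have HV: "H * ev_mat = ev_mat * mat_diag d (\<lambda>j. of_real (lam j))"
  proof (rule eq_matI)
    fix i j assume "i < dim_row (ev_mat * mat_diag d (\<lambda>j. of_real (lam j)))"
      "j < dim_col (ev_mat * mat_diag d (\<lambda>j. of_real (lam j)))"
    then have ij: "i < d" "j < d" by (auto simp: mat_diag_def)
    have "col ev_mat j = ev j"
      using ij by (auto simp: ev_mat_def intro!: eq_vecI)
    then have "(H * ev_mat) $$ (i, j) = (H *\<^sub>v ev j) $ i"
      using ij H_carrier by simp
    then show "(H * ev_mat) $$ (i, j) = (ev_mat * mat_diag d (\<lambda>j. of_real (lam j))) $$ (i, j)"
      using ij by (simp add: ev_eigen mat_diag_mult_right[of _ d] ev_mat_def mult.commute)
  qed (use H_carrier in \<open>auto simp: mat_diag_def\<close>)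
  have "H = (H * ev_mat) * adj ev_mat"
    using H_carrier by (simp add: square_mat_simps ev_mat_mult_adj_ev_mat)
  also have "\<dots> = eigen_diag (\<lambda>j. of_real (lam j))"
    by (simp add: HV eigen_diag_def)
  finally show ?thesis .
qed

lemma pow_smult_eq_eigen_diag: "(c \<cdot>\<^sub>m H) ^\<^sub>m n = eigen_diag (\<lambda>j. (c * of_real (lam j)) ^ n)"
proof (induction n)
  case 0
  then show ?case using H_carrier by (simp add: eigen_diag_one)
next
  case (Suc n)
  have "c \<cdot>\<^sub>m H = eigen_diag (\<lambda>j. c * of_real (lam j))"
    by (subst H_eq_eigen_diag) (rule smult_eigen_diag)
  with Suc show ?case by (simp add: eigen_diag_mult mult.commute)
qed

lemma mexp_smult_eq_eigen_diag: "mexp (c \<cdot>\<^sub>m H) = eigen_diag (\<lambda>j. exp (c * of_real (lam j)))"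
proof (rule eq_matI)
  fix i k assume "i < dim_row (eigen_diag (\<lambda>j. exp (c * of_real (lam j))))"
    "k < dim_col (eigen_diag (\<lambda>j. exp (c * of_real (lam j))))"
  then have ik: "i < d" "k < d" by auto
  have exp_sums: "(\<lambda>n. z ^ n / of_nat (fact n)) sums exp z" for z :: complex
    using exp_converges[of z] by (simp add: scaleR_conv_of_real field_simps)
  have "(\<lambda>n. \<Sum>j<d. (c * of_real (lam j)) ^ n / of_nat (fact n) * (ev j $ i * cnj (ev j $ k)))
      sums (\<Sum>j<d. exp (c * of_real (lam j)) * (ev j $ i * cnj (ev j $ k)))"
    by (intro sums_sum sums_mult2 exp_sums)
  then have "(\<lambda>n. ((c \<cdot>\<^sub>m H) ^\<^sub>m n) $$ (i, k) / of_nat (fact n))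
      sums eigen_diag (\<lambda>j. exp (c * of_real (lam j))) $$ (i, k)"
    using ik by (simp add: pow_smult_eq_eigen_diag index_eigen_diag sum_divide_distrib mult_ac)
  then show "mexp (c \<cdot>\<^sub>m H) $$ (i, k) = eigen_diag (\<lambda>j. exp (c * of_real (lam j))) $$ (i, k)"
    using ik H_carrier by (simp add: mexp_def sums_iff)
qed (use H_carrier in \<open>simp_all add: mexp_def\<close>)

lemma braket_ev_eigen_diag_mult_vec:
  assumes x: "x \<in> carrier_vec d" and j: "j < d"
  shows "braket (ev j) (eigen_diag f *\<^sub>v x) = f j * braket (ev j) x"
proof -
  have "adj ev_mat *\<^sub>v (eigen_diag f *\<^sub>v x) = (adj ev_mat * ev_mat) *\<^sub>v (mat_diag d f *\<^sub>v (adj ev_mat *\<^sub>v x))"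
    using x by (simp add: eigen_diag_def square_mat_simps)
  also have "\<dots> = mat_diag d f *\<^sub>v (adj ev_mat *\<^sub>v x)"
    using x by (simp add: adj_ev_mat_mult_ev_mat square_mat_simps)
  finally have "(adj ev_mat *\<^sub>v (eigen_diag f *\<^sub>v x)) $ j = f j * (adj ev_mat *\<^sub>v x) $ j"
    using x j by (simp add: index_mat_diag_mult_vec square_mat_simps)
  then show ?thesis
    using x j by (simp add: square_mat_simps)
qed

lemma braket_eq_sum_coords:
  assumes x: "x \<in> carrier_vec d" and y: "y \<in> carrier_vec d"
  shows "braket x y = (\<Sum>j<d. cnj (braket (ev j) x) * braket (ev j) y)"
proof -
  have "ev_mat *\<^sub>v (adj ev_mat *\<^sub>v y) = y"
    using y assoc_mult_mat_vec[of ev_mat d d "adj ev_mat" d y] by (simp add: ev_mat_mult_adj_ev_mat)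
  then have "braket x y = braket (adj ev_mat *\<^sub>v x) (adj ev_mat *\<^sub>v y)"
    using x y braket_adj_mult_vec[of "adj ev_mat" d d x "adj ev_mat *\<^sub>v y"]
    by (simp add: adj_adj square_mat_simps)
  also have "\<dots> = (\<Sum>j<d. cnj (braket (ev j) x) * braket (ev j) y)"
    using x y by (auto simp: braket_def[of "adj ev_mat *\<^sub>v x"] intro!: sum.cong)
  finally show ?thesis .
qed

lemma vnorm_sq_eq_sum_coords:
  assumes "x \<in> carrier_vec d"
  shows "(vnorm x)\<^sup>2 = (\<Sum>j<d. (cmod (braket (ev j) x))\<^sup>2)"
proof -
  have "of_real ((vnorm x)\<^sup>2) = braket x x" by (simp add: braket_self)
  also have "\<dots> = of_real (\<Sum>j<d. (cmod (braket (ev j) x))\<^sup>2)"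
    using assms by (simp only: braket_eq_sum_coords cnj_mult_self of_real_sum)
  finally show ?thesis by (simp only: of_real_eq_iff)
qed

lemma braket_eigen_diag_mult_vec:
  assumes "x \<in> carrier_vec d"
  shows "braket x (eigen_diag f *\<^sub>v x) = (\<Sum>j<d. f j * of_real ((cmod (braket (ev j) x))\<^sup>2))"
proof -
  have "braket x (eigen_diag f *\<^sub>v x) = (\<Sum>j<d. f j * (cnj (braket (ev j) x) * braket (ev j) x))"
    using assms by (auto simp: braket_eq_sum_coords braket_ev_eigen_diag_mult_vec square_mat_simps
        mult_ac intro!: sum.cong)
  then show ?thesis by (simp only: cnj_mult_self)
qed

lemma controlled_evolution_four_block:
  "kron_mat (outer (ket 0) (ket 0)) (mexp ((\<i> * of_real \<omega>) \<cdot>\<^sub>m H))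
     + \<i> \<cdot>\<^sub>m kron_mat (outer (ket 1) (ket 1)) (mexp ((- \<i> * of_real \<omega>) \<cdot>\<^sub>m H))
   = four_block_mat (eigen_diag (\<lambda>j. cis (\<omega> * lam j))) (0\<^sub>m d d) (0\<^sub>m d d)
       (eigen_diag (\<lambda>j. \<i> * cis (- (\<omega> * lam j))))"
  unfolding mexp_smult_eq_eigen_diag smult_eigen_diag
    kron_ket_projections_four_block[OF eigen_diag_carrier(1) eigen_diag_carrier(1)]
  by (simp add: cis_conv_exp mult.assoc)

lemma eigen_diag_mult_adj_unimodular:
  assumes "\<And>j. j < d \<Longrightarrow> cmod (f j) = 1"
  shows "eigen_diag f * adj (eigen_diag f) = 1\<^sub>m d"
proof -
  have "eigen_diag f * adj (eigen_diag f) = eigen_diag (\<lambda>_. 1)"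
    unfolding adj_eigen_diag eigen_diag_mult using assms
    by (intro eigen_diag_cong) (simp flip: complex_norm_square)
  then show ?thesis by (simp add: eigen_diag_one)
qed

lemma four_block_eigen_diag_unitary:
  assumes "\<And>j. j < d \<Longrightarrow> cmod (a j) = 1" "\<And>j. j < d \<Longrightarrow> cmod (b j) = 1"
    and U: "U = four_block_mat (eigen_diag a) (0\<^sub>m d d) (0\<^sub>m d d) (eigen_diag b)"
  shows "U * adj U = 1\<^sub>m (2 * d)"
proof -
  have "U * adj U = four_block_mat (eigen_diag a * adj (eigen_diag a)) (0\<^sub>m d d) (0\<^sub>m d d)
      (eigen_diag b * adj (eigen_diag b))"
    unfolding U adj_four_block_mat[OF eigen_diag_carrier(1) zero_carrier_mat zero_carrier_mat eigen_diag_carrier(1)]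
    by (subst mult_four_block_mat[of _ d d _ d _ _ _ _ d _ d]) (auto simp: adj_zero_mat adj_eigen_diag)
  then show ?thesis
    using assms by (simp add: eigen_diag_mult_adj_unimodular mult_2)
qed

lemma block_circuit_output:
  assumes a: "\<And>j. j < d \<Longrightarrow> cmod (a j) = 1" and b: "\<And>j. j < d \<Longrightarrow> cmod (b j) = 1"
    and x: "x \<in> carrier_vec d" "vnorm x = 1"
    and U: "U = four_block_mat (eigen_diag a) (0\<^sub>m d d) (0\<^sub>m d d) (eigen_diag b)"
    and \<Psi>: "\<Psi> = kron_vec ((1 / of_real (sqrt 2)) \<cdot>\<^sub>v (ket 0 + ket 1)) x"
    and R: "R = 1\<^sub>m (2 * d) - 2 \<cdot>\<^sub>m outer \<Psi> \<Psi>"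
    and W: "W = braket \<Psi> (U *\<^sub>v \<Psi>)"
  shows "W = (\<Sum>j<d. (a j + b j) * of_real ((cmod (braket (ev j) x))\<^sup>2)) / 2"
    and "partial_bra 0 d ((R * U * R * adj U) *\<^sub>v \<Psi>) = (1 / of_real (sqrt 2))
           \<cdot>\<^sub>v (of_real (4 * (cmod W)\<^sup>2 - 1) \<cdot>\<^sub>v x - (2 * cnj W) \<cdot>\<^sub>v (eigen_diag a *\<^sub>v x))"
    and "partial_bra 1 d ((R * U * R * adj U) *\<^sub>v \<Psi>) = (1 / of_real (sqrt 2))
           \<cdot>\<^sub>v (of_real (4 * (cmod W)\<^sup>2 - 1) \<cdot>\<^sub>v x - (2 * cnj W) \<cdot>\<^sub>v (eigen_diag b *\<^sub>v x))"
proof -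
  define s :: complex where "s = 1 / of_real (sqrt 2)"
  have s: "cnj s * s = 1 / 2"
    by (simp add: s_def flip: of_real_mult)
  have \<Psi>_blocks: "\<Psi> = (s \<cdot>\<^sub>v x) @\<^sub>v (s \<cdot>\<^sub>v x)"
    by (simp only: \<Psi> s_def kron_vec_ket_sum)
  have \<Psi>_carrier: "\<Psi> \<in> carrier_vec (2 * d)"
    using x by (simp add: \<Psi>_blocks mult_2)
  have U\<Psi>: "U *\<^sub>v \<Psi> = (s \<cdot>\<^sub>v (eigen_diag a *\<^sub>v x)) @\<^sub>v (s \<cdot>\<^sub>v (eigen_diag b *\<^sub>v x))"
    using x by (simp add: U \<Psi>_blocks mult_mat_vec_split mult_mat_vec[of _ d d])
  have "braket \<Psi> \<Psi> = 2 * (cnj s * s) * braket x x"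
    using x by (simp add: \<Psi>_blocks braket_append_vec braket_smult_left braket_smult_right)
  then have \<Psi>_unit: "braket \<Psi> \<Psi> = 1"
    by (simp add: s x braket_self)
  have "W = cnj s * s * (braket x (eigen_diag a *\<^sub>v x) + braket x (eigen_diag b *\<^sub>v x))"
    using x unfolding W U\<Psi>
    by (simp add: \<Psi>_blocks braket_append_vec[of _ d] braket_smult_left braket_smult_right
        square_mat_simps algebra_simps)
  then show "W = (\<Sum>j<d. (a j + b j) * of_real ((cmod (braket (ev j) x))\<^sup>2)) / 2"
    using x by (simp add: s braket_eigen_diag_mult_vec sum.distrib distrib_right)
  have U_carrier: "U \<in> carrier_mat (2 * d) (2 * d)"
    by (simp add: U mult_2)
  have "(R * U * R * adj U) *\<^sub>v \<Psi> = of_real (4 * (cmod W)\<^sup>2 - 1) \<cdot>\<^sub>v \<Psi> - (2 * cnj W) \<cdot>\<^sub>v (U *\<^sub>v \<Psi>)"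
    using U_carrier four_block_eigen_diag_unitary[OF a b U] \<Psi>_carrier \<Psi>_unit R W
    by (rule reflection_commutator_mult_vec)
  also have "\<dots> = (s \<cdot>\<^sub>v (of_real (4 * (cmod W)\<^sup>2 - 1) \<cdot>\<^sub>v x - (2 * cnj W) \<cdot>\<^sub>v (eigen_diag a *\<^sub>v x)))
      @\<^sub>v (s \<cdot>\<^sub>v (of_real (4 * (cmod W)\<^sup>2 - 1) \<cdot>\<^sub>v x - (2 * cnj W) \<cdot>\<^sub>v (eigen_diag b *\<^sub>v x)))"
    unfolding U\<Psi> unfolding \<Psi>_blocks smult_append_vec using x
    by (subst minus_append_vec[of _ d _ _ d])
      (auto intro!: arg_cong2[where f = append_vec] eq_vecI simp: algebra_simps square_mat_simps)
  finally have T\<Psi>: "(R * U * R * adj U) *\<^sub>v \<Psi> = (s \<cdot>\<^sub>v (of_real (4 * (cmod W)\<^sup>2 - 1) \<cdot>\<^sub>v x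
      - (2 * cnj W) \<cdot>\<^sub>v (eigen_diag a *\<^sub>v x))) @\<^sub>v (s \<cdot>\<^sub>v (of_real (4 * (cmod W)\<^sup>2 - 1) \<cdot>\<^sub>v x
      - (2 * cnj W) \<cdot>\<^sub>v (eigen_diag b *\<^sub>v x)))" .
  show "partial_bra 0 d ((R * U * R * adj U) *\<^sub>v \<Psi>) = (1 / of_real (sqrt 2))
           \<cdot>\<^sub>v (of_real (4 * (cmod W)\<^sup>2 - 1) \<cdot>\<^sub>v x - (2 * cnj W) \<cdot>\<^sub>v (eigen_diag a *\<^sub>v x))"
    unfolding T\<Psi> s_def using x by (subst partial_bra_append_vec(1)) (simp_all add: square_mat_simps)
  show "partial_bra 1 d ((R * U * R * adj U) *\<^sub>v \<Psi>) = (1 / of_real (sqrt 2))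
           \<cdot>\<^sub>v (of_real (4 * (cmod W)\<^sup>2 - 1) \<cdot>\<^sub>v x - (2 * cnj W) \<cdot>\<^sub>v (eigen_diag b *\<^sub>v x))"
    unfolding T\<Psi> s_def using x by (subst partial_bra_append_vec(2)) (simp_all add: square_mat_simps)
qed

lemma normalized_coord_sq:
  assumes y: "y \<in> carrier_vec d" and i: "i < d"
    and coords: "\<And>j. j < d \<Longrightarrow> braket (ev j) y = g j * braket (ev j) x"
  shows "(cmod (braket (ev i) ((1 / of_real (sqrt ((vnorm y)\<^sup>2))) \<cdot>\<^sub>v y)))\<^sup>2
       = (cmod (g i))\<^sup>2 * (cmod (braket (ev i) x))\<^sup>2
         / (\<Sum>j<d. (cmod (g j))\<^sup>2 * (cmod (braket (ev j) x))\<^sup>2)"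
proof -
  have "(vnorm y)\<^sup>2 = (\<Sum>j<d. (cmod (g j))\<^sup>2 * (cmod (braket (ev j) x))\<^sup>2)"
    using y by (simp add: vnorm_sq_eq_sum_coords coords norm_mult power_mult_distrib)
  moreover have "0 \<le> vnorm y" by (simp add: vnorm_def sum_nonneg)
  ultimately show ?thesis
    using i by (simp add: braket_smult_right coords norm_mult norm_divide power_mult_distrib power_divide
        sum_nonneg)
qed

lemma normalized_output_overlap:
  assumes x: "x \<in> carrier_vec d" "vnorm x = 1" and d: "0 < d" and c: "c \<noteq> 0"
    and y: "y = c \<cdot>\<^sub>v (of_real (4 * C\<^sup>2 - 1) \<cdot>\<^sub>v x - z \<cdot>\<^sub>v (eigen_diag f *\<^sub>v x))"
    and phase: "\<And>j. j < d \<Longrightarrow> z * f j = 2 * of_real C * cis (u j)"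
    and C: "C = (\<Sum>j<d. (cmod (braket (ev j) x))\<^sup>2 * cos (u j))"
  shows "(cmod (braket (ev 0) ((1 / of_real (sqrt ((vnorm y)\<^sup>2))) \<cdot>\<^sub>v y)))\<^sup>2
       = (cmod (braket (ev 0) x))\<^sup>2 * (1 + 4 * C * (4 * C\<^sup>2 - 1) * (C - cos (u 0)))"
proof -
  define \<chi> where "\<chi> = 4 * C\<^sup>2 - 1"
  define n where "n j = (cmod (braket (ev j) x))\<^sup>2" for j
  define g where "g j = c * (of_real \<chi> - of_real (2 * C) * cis (u j))" for j
  have coords: "braket (ev j) y = g j * braket (ev j) x" if "j < d" for j
    using x that
    by (simp add: y g_def \<chi>_def braket_smult_right braket_minus_right braket_ev_eigen_diag_mult_vec
        square_mat_simps phase algebra_simps)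
  have g: "(cmod (g j))\<^sup>2 = (cmod c)\<^sup>2 * (\<chi>\<^sup>2 - 4 * \<chi> * C * cos (u j) + 4 * C\<^sup>2)" for j
    unfolding g_def norm_mult power_mult_distrib cmod_real_minus_cis_sq by (simp add: algebra_simps)
  have n: "(\<Sum>j<d. n j) = 1"
    using vnorm_sq_eq_sum_coords[OF x(1)] x(2) by (simp add: n_def)
  have "(\<Sum>j<d. (cmod (g j))\<^sup>2 * n j)
      = (\<Sum>j<d. (cmod c)\<^sup>2 * ((\<chi>\<^sup>2 + 4 * C\<^sup>2) * n j - 4 * \<chi> * C * (n j * cos (u j))))"
    by (intro sum.cong) (simp_all add: g algebra_simps)
  also have "\<dots> = (cmod c)\<^sup>2 * ((\<chi>\<^sup>2 + 4 * C\<^sup>2) * (\<Sum>j<d. n j) - 4 * \<chi> * C * (\<Sum>j<d. n j * cos (u j)))"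
    by (simp add: sum_subtractf sum_distrib_left sum_distrib_right right_diff_distrib mult_ac)
  (* The only place where chi = 4 C^2 - 1 matters: the unnormalised output has squared norm |c|^2. *)
  also have "\<dots> = (cmod c)\<^sup>2"
  proof -
    have "(\<Sum>j<d. n j * cos (u j)) = C" by (simp add: C n_def)
    then show ?thesis by (simp add: n \<chi>_def power2_eq_square algebra_simps)
  qed
  finally have "(\<Sum>j<d. (cmod (g j))\<^sup>2 * n j) = (cmod c)\<^sup>2" .
  then have "(cmod (braket (ev 0) ((1 / of_real (sqrt ((vnorm y)\<^sup>2))) \<cdot>\<^sub>v y)))\<^sup>2
      = (cmod (g 0))\<^sup>2 * n 0 / (cmod c)\<^sup>2"
    using normalized_coord_sq[of y 0 g x] x d coords by (simp add: y square_mat_simps n_def)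
  also have "\<dots> = n 0 * (1 + 4 * C * \<chi> * (C - cos (u 0)))"
    unfolding g using c by (simp add: \<chi>_def power2_eq_square field_simps)
  finally show ?thesis by (simp add: n_def \<chi>_def)
qed

lemma quarter_pi_circuit:
  assumes x: "x \<in> carrier_vec d" "vnorm x = 1" and d: "0 < d"
    and U: "U = kron_mat (outer (ket 0) (ket 0)) (mexp ((\<i> * of_real (pi / 4)) \<cdot>\<^sub>m H))
             + \<i> \<cdot>\<^sub>m kron_mat (outer (ket 1) (ket 1)) (mexp ((- \<i> * of_real (pi / 4)) \<cdot>\<^sub>m H))"
    and \<Psi>: "\<Psi> = kron_vec ((1 / of_real (sqrt 2)) \<cdot>\<^sub>v (ket 0 + ket 1)) x"
    and R: "R = 1\<^sub>m (2 * d) - 2 \<cdot>\<^sub>m outer \<Psi> \<Psi>"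
    and W: "W = braket \<Psi> (U *\<^sub>v \<Psi>)"
    and C: "C = (\<Sum>j<d. (cmod (braket (ev j) x))\<^sup>2 * cos (pi / 4 * (1 - lam j)))"
  shows "W = of_real C * cis (pi / 4)"
    and "k \<in> {0, 1} \<Longrightarrow>
      (cmod (braket (ev 0) ((1 / of_real (sqrt ((vnorm (partial_bra k d ((R * U * R * adj U) *\<^sub>v \<Psi>)))\<^sup>2)))
         \<cdot>\<^sub>v partial_bra k d ((R * U * R * adj U) *\<^sub>v \<Psi>))))\<^sup>2
      = (cmod (braket (ev 0) x))\<^sup>2 * (1 + 4 * C * (4 * C\<^sup>2 - 1) * (C - cos (pi / 4 * (1 - lam 0))))"
proof -
  define a where "a j = cis (pi / 4 * lam j)" for j
  define b where "b j = \<i> * cis (- (pi / 4 * lam j))" for j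
  have U_blocks: "U = four_block_mat (eigen_diag a) (0\<^sub>m d d) (0\<^sub>m d d) (eigen_diag b)"
    unfolding U a_def b_def by (rule controlled_evolution_four_block)
  have unimodular: "\<And>j. j < d \<Longrightarrow> cmod (a j) = 1" "\<And>j. j < d \<Longrightarrow> cmod (b j) = 1"
    by (simp_all add: a_def b_def norm_mult)
  note out = block_circuit_output[OF unimodular x U_blocks \<Psi> R W]
  have "W = (\<Sum>j<d. (a j + b j) * of_real ((cmod (braket (ev j) x))\<^sup>2) / 2)"
    by (simp only: out(1) sum_divide_distrib)
  also have "\<dots> = (\<Sum>j<d. cis (pi / 4) * of_real ((cmod (braket (ev j) x))\<^sup>2 * cos (pi / 4 * (1 - lam j))))"
    by (intro sum.cong refl) (simp only: a_def b_def quarter_pi_phase_sum, simp)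
  finally show W': "W = of_real C * cis (pi / 4)"
    by (simp add: C sum_distrib_left sum_distrib_right mult_ac)
  have W2: "(cmod W)\<^sup>2 = C\<^sup>2"
    by (simp add: W' norm_mult)
  have phase_a: "2 * cnj W * a j = 2 * of_real C * cis (- (pi / 4 * (1 - lam j)))" for j
    by (simp only: W' a_def mult.assoc quarter_pi_phase_shifts(1))
  have phase_b: "2 * cnj W * b j = 2 * of_real C * cis (pi / 4 * (1 - lam j))" for j
    by (simp only: W' b_def mult.assoc quarter_pi_phase_shifts(2))
  have C': "C = (\<Sum>j<d. (cmod (braket (ev j) x))\<^sup>2 * cos (- (pi / 4 * (1 - lam j))))"
    by (simp add: C)
  assume "k \<in> {0, 1}"
  then consider "k = 0" | "k = 1" by blast
  then show "(cmod (braket (ev 0) ((1 / of_real (sqrt ((vnorm (partial_bra k d ((R * U * R * adj U) *\<^sub>v \<Psi>)))\<^sup>2)))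
         \<cdot>\<^sub>v partial_bra k d ((R * U * R * adj U) *\<^sub>v \<Psi>))))\<^sup>2
      = (cmod (braket (ev 0) x))\<^sup>2 * (1 + 4 * C * (4 * C\<^sup>2 - 1) * (C - cos (pi / 4 * (1 - lam 0))))"
  proof cases
    case 1
    show ?thesis
      using normalized_output_overlap[OF x d _ out(2)[unfolded W2] phase_a C'] 1 by simp
  next
    case 2
    show ?thesis
      using normalized_output_overlap[OF x d _ out(3)[unfolded W2] phase_b C] 2 by simp
  qed
qed

end

section \<open>Estimates for the sorted spectrum\<close>

lemma le_by_consecutive_steps:
  fixes f :: "nat \<Rightarrow> 'a :: preorder"
  assumes step: "\<And>j. 1 \<le> j \<Longrightarrow> Suc j < d \<Longrightarrow> f j \<le> f (Suc j)"
    and ij: "1 \<le> i" "i \<le> j" and j: "j < d"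
  shows "f i \<le> f j"
  using ij(2) j
proof (induction j rule: dec_induct)
  case (step n)
  then have "f n \<le> f (Suc n)" using ij(1) by (intro assms(1)) auto
  with step show ?case by (auto intro: order_trans)
qed simp

lemma cos_quarter_pi_mono:
  "0 \<le> l \<Longrightarrow> l \<le> l' \<Longrightarrow> l' \<le> 1 \<Longrightarrow> cos (pi / 4 * (1 - l)) \<le> cos (pi / 4 * (1 - l'))"
  by (intro cos_monotone_0_pi_le) (auto simp: field_simps)

lemma cos_quarter_pi_strict_mono:
  "0 \<le> l \<Longrightarrow> l < l' \<Longrightarrow> l' \<le> 1 \<Longrightarrow> cos (pi / 4 * (1 - l)) < cos (pi / 4 * (1 - l'))"
  by (intro cos_monotone_0_pi) (auto simp: field_simps)

lemma half_less_cos_quarter_pi: "0 \<le> l \<Longrightarrow> l \<le> 1 \<Longrightarrow> 1 / 2 < cos (pi / 4 * (1 - l))"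
proof -
  assume "0 \<le> l" "l \<le> 1"
  then have "cos (pi / 4) \<le> cos (pi / 4 * (1 - l))"
    using cos_quarter_pi_mono[of 0 l] by simp
  moreover have "1 / 2 < cos (pi / 4)"
    using sqrt2_less_2 by (simp add: cos_45)
  ultimately show ?thesis by linarith
qed

lemma cos_shifted_spectrum_bounds:
  fixes lam :: "nat \<Rightarrow> real"
  assumes d: "2 \<le> d" and lam: "0 < lam 0" "lam 0 < lam 1"
    and mono: "\<And>j. 1 \<le> j \<Longrightarrow> Suc j < d \<Longrightarrow> lam j \<le> lam (Suc j)"
    and top: "lam (d - 1) \<le> 1"
  shows "\<And>j. j < d \<Longrightarrow> 1 / 2 < cos (pi / 4 * (1 - lam j))"
    and "cos (pi / 4 * (1 - lam 0)) < cos (pi / 4 * (1 - lam 1))"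
    and "\<And>j. 1 \<le> j \<Longrightarrow> j < d \<Longrightarrow> cos (pi / 4 * (1 - lam 1)) \<le> cos (pi / 4 * (1 - lam j))"
proof -
  have above_1: "lam 1 \<le> lam j" if "1 \<le> j" "j < d" for j
    using that by (intro le_by_consecutive_steps[where f = lam, OF mono]) auto
  have pos: "0 < lam j" if "j < d" for j
    using lam above_1[of j] that by (cases "j = 0") auto
  have le_1: "lam j \<le> 1" if "j < d" for j
  proof -
    have "lam (max 1 j) \<le> lam (d - 1)"
      using that d by (intro le_by_consecutive_steps[where f = lam, OF mono]) auto
    then show ?thesis using lam top by (cases "j = 0") auto
  qed
  show "\<And>j. j < d \<Longrightarrow> 1 / 2 < cos (pi / 4 * (1 - lam j))"
    using half_less_cos_quarter_pi pos le_1 by (simp add: less_imp_le)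
  show "cos (pi / 4 * (1 - lam 0)) < cos (pi / 4 * (1 - lam 1))"
    using cos_quarter_pi_strict_mono lam le_1[of 1] d by (simp add: less_imp_le)
  show "\<And>j. 1 \<le> j \<Longrightarrow> j < d \<Longrightarrow> cos (pi / 4 * (1 - lam 1)) \<le> cos (pi / 4 * (1 - lam j))"
    using cos_quarter_pi_mono pos[of 1] above_1 le_1 d by (simp add: less_imp_le)
qed

lemma fidelity_gain_bounds:
  fixes n c :: "nat \<Rightarrow> real"
  assumes d: "2 \<le> d" and n: "\<And>j. 0 \<le> n j" "(\<Sum>j<d. n j) = 1"
    and c: "1 / 2 < c 0" "c 0 < c 1" "\<And>j. 1 \<le> j \<Longrightarrow> j < d \<Longrightarrow> c 1 \<le> c j"
    and C: "C = (\<Sum>j<d. n j * c j)"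
  shows "c 0 \<le> C"
    and "0 < 4 * c 0 * (4 * (c 0)\<^sup>2 - 1) * (c 1 - c 0)"
    and "4 * c 0 * (4 * (c 0)\<^sup>2 - 1) * (c 1 - c 0) * (n 0 * (1 - n 0))
       \<le> 4 * C * (4 * C\<^sup>2 - 1) * (C - c 0) * n 0"
proof -
  have split: "(\<Sum>j<d. g j) = g 0 + (\<Sum>j\<in>{1..<d}. g j)" for g :: "nat \<Rightarrow> real"
    using d by (simp add: lessThan_atLeast0 sum.atLeast_Suc_lessThan)
  have rest: "(\<Sum>j\<in>{1..<d}. n j) = 1 - n 0"
    using split[of n] n(2) by simp
  have "(1 - n 0) * (c 1 - c 0) = (\<Sum>j\<in>{1..<d}. n j * (c 1 - c 0))"
    by (simp add: rest[symmetric] sum_distrib_right)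
  also have "\<dots> \<le> (\<Sum>j\<in>{1..<d}. n j * (c j - c 0))"
    using n(1) c(3) by (intro sum_mono mult_left_mono) auto
  also have "\<dots> = (\<Sum>j<d. n j * (c j - c 0))"
    using split[of "\<lambda>j. n j * (c j - c 0)"] by simp
  also have "\<dots> = C - c 0"
    using n(2) by (simp add: C right_diff_distrib sum_subtractf flip: sum_distrib_right)
  finally have gap: "(1 - n 0) * (c 1 - c 0) \<le> C - c 0" .
  have "0 \<le> (\<Sum>j\<in>{1..<d}. n j)"
    using n(1) by (intro sum_nonneg) auto
  then have gap_nonneg: "0 \<le> (1 - n 0) * (c 1 - c 0)"
    using rest c(2) by simp
  with gap show "c 0 \<le> C" by linarith
  have c0_sq: "0 < 4 * (c 0)\<^sup>2 - 1"
    using c(1) power_strict_mono[of "1 / 2" "c 0" 2] by (simp add: power_divide)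
  then show "0 < 4 * c 0 * (4 * (c 0)\<^sup>2 - 1) * (c 1 - c 0)"
    using c(1,2) by simp
  have "4 * c 0 * (4 * (c 0)\<^sup>2 - 1) \<le> 4 * C * (4 * C\<^sup>2 - 1)"
    using \<open>c 0 \<le> C\<close> c(1) c0_sq by (intro mult_mono power_mono) auto
  then have "4 * c 0 * (4 * (c 0)\<^sup>2 - 1) * ((1 - n 0) * (c 1 - c 0)) \<le> 4 * C * (4 * C\<^sup>2 - 1) * (C - c 0)"
    using gap gap_nonneg c(1) c0_sq by (intro mult_mono) (auto intro: order_trans[rotated])
  then have "4 * c 0 * (4 * (c 0)\<^sup>2 - 1) * ((1 - n 0) * (c 1 - c 0)) * n 0
      \<le> 4 * C * (4 * C\<^sup>2 - 1) * (C - c 0) * n 0"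
    using n(1)[of 0] by (rule mult_right_mono)
  then show "4 * c 0 * (4 * (c 0)\<^sup>2 - 1) * (c 1 - c 0) * (n 0 * (1 - n 0))
       \<le> 4 * C * (4 * C\<^sup>2 - 1) * (C - c 0) * n 0"
    by (simp only: mult_ac)
qed

theorem proposition1:
  fixes q d :: nat and H :: "complex mat" and lam :: "nat \<Rightarrow> real"
    and ev :: "nat \<Rightarrow> complex vec" and \<alpha> :: "complex vec"
  assumes q: "q \<ge> 1" and d: "d = 2 ^ q"
    and H: "H \<in> carrier_mat d d" "hermitian H"
    and ev_dim: "\<And>j. j < d \<Longrightarrow> ev j \<in> carrier_vec d"
    and ev_eig: "\<And>j. j < d \<Longrightarrow> H *\<^sub>v ev j = of_real (lam j) \<cdot>\<^sub>v ev j"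
    and ev_on: "\<And>i j. i < d \<Longrightarrow> j < d \<Longrightarrow> braket (ev i) (ev j) = (if i = j then 1 else 0)"
    and lam0: "0 < lam 0" and lam01: "lam 0 < lam 1"
    and lam_mono: "\<And>j. 1 \<le> j \<Longrightarrow> Suc j < d \<Longrightarrow> lam j \<le> lam (Suc j)"
    and lam_le1: "lam (d - 1) \<le> 1"
    and \<alpha>: "\<alpha> \<in> carrier_vec d" "vnorm \<alpha> = 1"
  assumes om: "\<omega> = pi / 4"
    and U_def: "U = kron_mat (outer (ket 0) (ket 0)) (mexp ((\<i> * of_real \<omega>) \<cdot>\<^sub>m H))
             + \<i> \<cdot>\<^sub>m kron_mat (outer (ket 1) (ket 1)) (mexp ((- \<i> * of_real \<omega>) \<cdot>\<^sub>m H))"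
    and "\<gamma> = (\<lambda>j. braket (ev j) \<alpha>)"
    and "ketp = (1 / of_real (sqrt 2)) \<cdot>\<^sub>v (ket 0 + ket 1)"
    and "\<Psi> = kron_vec ketp \<alpha>"
    and "R = 1\<^sub>m (2 * d) - 2 \<cdot>\<^sub>m outer \<Psi> \<Psi>"
    and "T = R * U * R * adj U"
    and "p = (\<lambda>k. (vnorm (partial_bra k d (T *\<^sub>v \<Psi>)))\<^sup>2)"
    and "\<phi> = (\<lambda>k. (1 / of_real (sqrt (p k))) \<cdot>\<^sub>v partial_bra k d (T *\<^sub>v \<Psi>))"
    and "\<Gamma> = (\<lambda>\<psi>. (cmod (braket (ev 0) \<psi>))\<^sup>2)"
    and "W = braket \<Psi> (U *\<^sub>v \<Psi>)"
    and "lt = (\<lambda>j. pi / 4 * (1 - lam j))"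
    and "chi = 4 * (cmod W)\<^sup>2 - 1"
    and "\<xi> = (\<lambda>j. cmod W - cos (lt j))"
    and "cstar = 4 * cos (lt 0) * (4 * (cos (lt 0))\<^sup>2 - 1) * (cos (lt 1) - cos (lt 0))"
  shows "W = of_real (cmod W) * exp (\<i> * of_real (pi / 4))
    \<and> cmod W = (\<Sum>j<d. (cmod (\<gamma> j))\<^sup>2 * cos (lt j))
    \<and> cstar > 0
    \<and> (0 < \<Gamma> \<alpha> \<and> \<Gamma> \<alpha> < 1 \<longrightarrow>
        (\<forall>k\<in>{0, 1}.
           \<Gamma> (\<phi> k) - \<Gamma> \<alpha> = 4 * cmod W * chi * \<xi> 0 * (cmod (\<gamma> 0))\<^sup>2
         \<and> 4 * cmod W * chi * \<xi> 0 * (cmod (\<gamma> 0))\<^sup>2 \<ge> cstar * \<Gamma> \<alpha> * (1 - \<Gamma> \<alpha>)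
         \<and> cstar * \<Gamma> \<alpha> * (1 - \<Gamma> \<alpha>) > 0))"
proof -
  interpret orthonormal_eigenbasis d H lam ev
    using H(1) ev_dim ev_eig ev_on by unfold_locales
  note defs = assms(16-28)
  note chi = \<open>chi = 4 * (cmod W)\<^sup>2 - 1\<close> and \<xi> = \<open>\<xi> = (\<lambda>j. cmod W - cos (lt j))\<close>
    and cstar = \<open>cstar = 4 * cos (lt 0) * (4 * (cos (lt 0))\<^sup>2 - 1) * (cos (lt 1) - cos (lt 0))\<close>
  have "(2::nat) ^ 1 \<le> 2 ^ q" using q by (intro power_increasing) auto
  then have d2: "2 \<le> d" and d0: "0 < d" by (simp_all add: d)
  have cos_bounds: "\<And>j. j < d \<Longrightarrow> 1 / 2 < cos (lt j)" "cos (lt 0) < cos (lt 1)"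
    "\<And>j. 1 \<le> j \<Longrightarrow> j < d \<Longrightarrow> cos (lt 1) \<le> cos (lt j)"
    using cos_shifted_spectrum_bounds[OF d2 lam0 lam01 lam_mono lam_le1] by (simp_all add: defs)
  define C where "C = (\<Sum>j<d. (cmod (\<gamma> j))\<^sup>2 * cos (lt j))"
  have norm: "(\<Sum>j<d. (cmod (\<gamma> j))\<^sup>2) = 1"
    using vnorm_sq_eq_sum_coords[OF \<alpha>(1)] \<alpha>(2) by (simp add: defs)
  note gain = fidelity_gain_bounds[where n = "\<lambda>j. (cmod (\<gamma> j))\<^sup>2" and c = "\<lambda>j. cos (lt j)",
      OF d2 _ norm cos_bounds(1)[OF d0] cos_bounds(2,3) C_def]
  note circuit = quarter_pi_circuit[OF \<alpha> _ _ _ \<open>R = 1\<^sub>m (2 * d) - 2 \<cdot>\<^sub>m outer \<Psi> \<Psi>\<close>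
      \<open>W = braket \<Psi> (U *\<^sub>v \<Psi>)\<close>, of C]
  have W: "W = of_real C * cis (pi / 4)"
    using circuit(1) d0 by (simp add: defs U_def om C_def)
  have cW: "cmod W = C"
    using W gain(1) cos_bounds(1)[OF d0] by (simp add: norm_mult)
  have \<Gamma>\<alpha>: "\<Gamma> \<alpha> = (cmod (\<gamma> 0))\<^sup>2"
    by (simp add: defs)
  have \<Gamma>\<phi>: "\<Gamma> (\<phi> k) = \<Gamma> \<alpha> * (1 + 4 * C * (4 * C\<^sup>2 - 1) * (C - cos (lt 0)))" if "k \<in> {0, 1}" for k
    using circuit(2)[OF _ _ _ _ that] d0 by (simp add: defs U_def om C_def)
  show ?thesis
  proof (intro conjI impI ballI)
    show "W = of_real (cmod W) * exp (\<i> * of_real (pi / 4))"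
      by (subst cW) (simp add: W cis_conv_exp)
    show "cmod W = (\<Sum>j<d. (cmod (\<gamma> j))\<^sup>2 * cos (lt j))"
      by (simp add: cW C_def)
    show "cstar > 0"
      using gain(2) by (simp add: cstar)
    fix k :: nat assume \<Gamma>: "0 < \<Gamma> \<alpha> \<and> \<Gamma> \<alpha> < 1" and k: "k \<in> {0, 1}"
    show "\<Gamma> (\<phi> k) - \<Gamma> \<alpha> = 4 * cmod W * chi * \<xi> 0 * (cmod (\<gamma> 0))\<^sup>2"
      by (simp add: \<Gamma>\<phi>[OF k] \<Gamma>\<alpha> cW chi \<xi> algebra_simps)
    show "4 * cmod W * chi * \<xi> 0 * (cmod (\<gamma> 0))\<^sup>2 \<ge> cstar * \<Gamma> \<alpha> * (1 - \<Gamma> \<alpha>)"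
      using gain(3) by (simp add: \<Gamma>\<alpha> cW chi \<xi> cstar mult_ac)
    show "cstar * \<Gamma> \<alpha> * (1 - \<Gamma> \<alpha>) > 0"
      using \<open>cstar > 0\<close> \<Gamma> by simp
  qed
qed

end
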